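(* Let $1 \le p \le \infty$ and let $f$ be analytic in the unit disc $\mathbb{D}$ with $f' \in A^p$. Then $f \in H^p$ and \[ \|f\|_{H^p} \le \|f'\|_{A^p} + |f(0)|. \]
   Context: $\mathbb{D}$ is the open unit disc and $\sigma$ is normalized area measure on $\mathbb{D}$ ($\sigma(\mathbb{D})=1$). For $1\le p<\infty$, $A^p$ is the Bergman space of analytic $f$ on $\mathbb{D}$ with $\|f\|_{A^p} = (\int_{\mathbb{D}} |f|^p\,d\sigma)^{1/p}<\infty$; $\|f\|_{A^\infty}$ denotes $\sup_{\mathbb{D}}|f|$. For $0<p<\infty$, $H^p$ is the Hardy space of analytic $f$ on $\mathbb{D}$ with $\|f\|_{H^p}=\sup_{0<r<1}\big(\frac{1}{2\pi}\int_0^{2\pi}|f(re^{i\theta})|^p\,d\theta\big)^{1/p}<\infty$, and $H^\infty$ is the space of bounded analytic functions with the sup norm. *)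

theory Defs
  imports "HOL-Analysis.Analysis"
begin

definition unit_disc :: "complex set" where
  "unit_disc = ball 0 1"

definition in_bergman :: "ereal \<Rightarrow> (complex \<Rightarrow> complex) \<Rightarrow> bool" where
  "in_bergman p f \<longleftrightarrow> f holomorphic_on unit_disc \<and>
     (if p = \<infinity> then bounded (f ` unit_disc)
      else set_integrable lborel unit_disc (\<lambda>z. cmod (f z) powr real_of_ereal p))"

definition bergman_norm :: "ereal \<Rightarrow> (complex \<Rightarrow> complex) \<Rightarrow> real" where
  "bergman_norm p f =
     (if p = \<infinity> then (SUP z\<in>unit_disc. cmod (f z))
      else ((1 / pi) * (\<integral>z\<in>unit_disc. cmod (f z) powr real_of_ereal p \<partial>lborel))
             powr (1 / real_of_ereal p))"

definition integral_mean :: "real \<Rightarrow> (complex \<Rightarrow> complex) \<Rightarrow> real \<Rightarrow> real" where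
  "integral_mean p f r =
     ((1 / (2 * pi)) * (LBINT t=0..2*pi. cmod (f (of_real r * cis t)) powr p)) powr (1 / p)"

definition in_hardy :: "ereal \<Rightarrow> (complex \<Rightarrow> complex) \<Rightarrow> bool" where
  "in_hardy p f \<longleftrightarrow> f holomorphic_on unit_disc \<and>
     (if p = \<infinity> then bounded (f ` unit_disc)
      else bdd_above (integral_mean (real_of_ereal p) f ` {0<..<1}))"

definition hardy_norm :: "ereal \<Rightarrow> (complex \<Rightarrow> complex) \<Rightarrow> real" where
  "hardy_norm p f =
     (if p = \<infinity> then (SUP z\<in>unit_disc. cmod (f z))
      else (SUP r\<in>{0<..<1}. integral_mean (real_of_ereal p) f r))"

end

(*
  Along each radius, f (r e^{it}) - f 0 is the integral of f', so
  |f (r e^{it})| <= |f 0| + H t with H t = integral_0^r |f' (s e^{it})| ds, and by Minkowski's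
  inequality it suffices to bound the L^q mean of H. As the radius is at most 1, Jensen's
  inequality and Fubini bound integral H^q dt by integral_0^r M(s) ds, where
  M(s) = integral_0^{2 pi} |f' (s e^{it})|^q dt. Since |f'|^q is subharmonic (Poisson
  representation plus Jensen), M increases with s, and Chebyshev's integral inequality gives
  integral_0^rho M <= (2 / rho) integral_0^rho s M(s) ds, which in polar coordinates is
  (2 / rho) times the area integral of |f'|^q over the disc of radius rho. Letting rho -> 1 yields
  the bound with the normalised area measure. For p = infinity this is the mean value inequality.
*)

theory Submission
  imports Defs "HOL-Complex_Analysis.Cauchy_Integral_Formula"
begin

section \<open>Polar coordinates in the plane\<close>

text \<open>The change of variables theorem is stated on \<open>real^'n\<close>, so integrals over \<open>complex\<close>
  and over \<open>real \<times> real\<close> are transported to \<open>real^2\<close>.\<close>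

lemma image_eq_vimage_of_inverse:
  assumes "\<And>x. g (f x) = x" "\<And>y. f (g y) = y"
  shows "f ` A = g -` A"
proof
  show "f ` A \<subseteq> g -` A" using assms(1) by auto
  show "g -` A \<subseteq> f ` A" using assms(2) by (metis image_eqI subsetI vimageE)
qed

definition vec_of_complex :: "complex \<Rightarrow> real^2" where
  "vec_of_complex z = vector [Re z, Im z]"

definition complex_of_vec :: "real^2 \<Rightarrow> complex" where
  "complex_of_vec x = Complex (x$1) (x$2)"

lemma complex_of_vec_of_complex [simp]: "complex_of_vec (vec_of_complex z) = z"
  by (simp add: complex_of_vec_def vec_of_complex_def complex_eqI)

lemma vec_of_complex_of_vec [simp]: "vec_of_complex (complex_of_vec x) = x"
  by (simp add: complex_of_vec_def vec_of_complex_def vec_eq_iff forall_2)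

lemma complex_of_vec_vector [simp]: "complex_of_vec (vector [a, b]) = Complex a b"
  by (simp add: complex_of_vec_def)

lemma norm_vec_of_complex [simp]: "norm (vec_of_complex z) = norm z"
  by (simp add: vec_of_complex_def norm_vec_def L2_set_def UNIV_2 cmod_def)

lemma norm_complex_of_vec [simp]: "norm (complex_of_vec x) = norm x"
  by (metis vec_of_complex_of_vec norm_vec_of_complex)

lemma bounded_linear_vec_of_complex: "bounded_linear vec_of_complex"
  by (auto intro!: linearI simp: linear_conv_bounded_linear[symmetric] vec_of_complex_def vec_eq_iff forall_2)

lemma bounded_linear_complex_of_vec: "bounded_linear complex_of_vec"
  by (auto intro!: linearI simp: linear_conv_bounded_linear[symmetric] complex_of_vec_def complex_eqI)

lemma vec_of_complex_image_cbox: "vec_of_complex ` cbox u v = cbox (vec_of_complex u) (vec_of_complex v)"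
  unfolding image_eq_vimage_of_inverse[OF complex_of_vec_of_complex vec_of_complex_of_vec]
  by (simp add: set_eq_iff cbox_complex_eq mem_box_cart forall_2 complex_of_vec_def vec_of_complex_def)

lemma complex_of_vec_image_cbox: "complex_of_vec ` cbox a b = cbox (complex_of_vec a) (complex_of_vec b)"
  unfolding image_eq_vimage_of_inverse[OF vec_of_complex_of_vec complex_of_vec_of_complex]
  by (simp add: set_eq_iff cbox_complex_eq mem_box_cart forall_2 complex_of_vec_def vec_of_complex_def)

lemma content_vec_of_complex_image_cbox:
  "Henstock_Kurzweil_Integration.content (vec_of_complex ` cbox u v)
    = 1 * Henstock_Kurzweil_Integration.content (cbox u v)"
proof -
  have "cbox (vec_of_complex u) (vec_of_complex v) = {} \<longleftrightarrow> cbox u v = {}"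
    by (metis vec_of_complex_image_cbox image_is_empty)
  then show ?thesis
    unfolding vec_of_complex_image_cbox content_cbox_if_cart content_cbox_if
    by (simp add: UNIV_2 vec_of_complex_def Basis_complex_def)
qed

lemma has_integral_vec_of_complex:
  fixes F :: "real^2 \<Rightarrow> real"
  assumes "(F has_integral i) (cbox a b)"
  shows "((\<lambda>z. F (vec_of_complex z)) has_integral i) (cbox (complex_of_vec a) (complex_of_vec b))"
  using has_integral_twiddle[where g=vec_of_complex and h=complex_of_vec and r=1,
      OF _ _ _ linear_continuous_at[OF bounded_linear_vec_of_complex] _ _ content_vec_of_complex_image_cbox assms]
  by (force simp: vec_of_complex_image_cbox complex_of_vec_image_cbox)

lemma has_integral_ball_vec_of_complex:
  fixes \<phi> :: "real^2 \<Rightarrow> real"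
  assumes "(\<phi> has_integral I) (ball 0 \<rho>)"
  shows "((\<lambda>z. \<phi> (vec_of_complex z)) has_integral I) (ball 0 \<rho>)"
proof -
  have "ball 0 \<rho> \<subseteq> cbox (vector [- \<rho>, - \<rho>]) (vector [\<rho>, \<rho>] :: real^2)"
  proof
    fix x :: "real^2"
    assume "x \<in> ball 0 \<rho>"
    then show "x \<in> cbox (vector [- \<rho>, - \<rho>]) (vector [\<rho>, \<rho>])"
      using component_le_norm_cart[of x 1] component_le_norm_cart[of x 2]
      by (auto simp: mem_box_cart forall_2)
  qed
  with assms have "((\<lambda>x. if x \<in> ball 0 \<rho> then \<phi> x else 0) has_integral I)
      (cbox (vector [- \<rho>, - \<rho>]) (vector [\<rho>, \<rho>]))"
    using has_integral_restrict by blast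
  from has_integral_vec_of_complex[OF this]
  have "((\<lambda>z. if z \<in> ball 0 \<rho> then \<phi> (vec_of_complex z) else 0) has_integral I)
      (cbox (Complex (- \<rho>) (- \<rho>)) (Complex \<rho> \<rho>))"
    by simp
  moreover have "ball 0 \<rho> \<subseteq> cbox (Complex (- \<rho>) (- \<rho>)) (Complex \<rho> \<rho>)"
  proof
    fix z :: complex
    assume "z \<in> ball 0 \<rho>"
    then show "z \<in> cbox (Complex (- \<rho>) (- \<rho>)) (Complex \<rho> \<rho>)"
      using abs_Re_le_cmod[of z] abs_Im_le_cmod[of z] by (auto simp: cbox_complex_eq)
  qed
  ultimately show ?thesis
    using has_integral_restrict by blast
qed

definition vec_of_pair :: "real \<times> real \<Rightarrow> real^2" where
  "vec_of_pair = (\<lambda>(a, b). vector [a, b])"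

definition pair_of_vec :: "real^2 \<Rightarrow> real \<times> real" where
  "pair_of_vec x = (x$1, x$2)"

lemma pair_of_vec_of_pair [simp]: "pair_of_vec (vec_of_pair y) = y"
  by (cases y) (simp add: vec_of_pair_def pair_of_vec_def)

lemma vec_of_pair_of_vec [simp]: "vec_of_pair (pair_of_vec x) = x"
  by (simp add: vec_of_pair_def pair_of_vec_def vec_eq_iff forall_2)

lemma pair_of_vec_image_cbox: "pair_of_vec ` cbox u v = cbox (pair_of_vec u) (pair_of_vec v)"
  unfolding image_eq_vimage_of_inverse[OF vec_of_pair_of_vec pair_of_vec_of_pair]
  by (auto simp: mem_box_cart forall_2 vec_of_pair_def pair_of_vec_def cbox_Pair_iff)

lemma vec_of_pair_image_cbox: "vec_of_pair ` cbox a b = cbox (vec_of_pair a) (vec_of_pair b)"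
  unfolding image_eq_vimage_of_inverse[OF pair_of_vec_of_pair vec_of_pair_of_vec]
  by (cases a; cases b) (auto simp: mem_box_cart forall_2 vec_of_pair_def pair_of_vec_def cbox_Pair_iff)

lemma content_pair_of_vec_image_cbox:
  "Henstock_Kurzweil_Integration.content (pair_of_vec ` cbox u v)
    = 1 * Henstock_Kurzweil_Integration.content (cbox u v)"
proof (cases "cbox u v = {}")
  case True
  then show ?thesis by (simp add: pair_of_vec_image_cbox)
next
  case False
  then have "u$1 \<le> v$1" "u$2 \<le> v$2"
    by (auto simp: box_ne_empty cart_eq_inner_axis Basis_vec_def)
  with False show ?thesis
    unfolding pair_of_vec_image_cbox by (simp add: pair_of_vec_def content_Pair content_cbox_cart UNIV_2)
qed

lemma has_integral_pair_of_vec: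
  fixes F :: "real \<times> real \<Rightarrow> real"
  assumes "(F has_integral i) (cbox (a1, a2) (b1, b2))"
  shows "((\<lambda>x. F (pair_of_vec x)) has_integral i) (cbox (vector [a1, a2]) (vector [b1, b2]))"
proof -
  have "((\<lambda>x. F (pair_of_vec x)) has_integral (1 / 1) *\<^sub>R i) (vec_of_pair ` cbox (a1, a2) (b1, b2))"
  proof (rule has_integral_twiddle[where g=pair_of_vec and h=vec_of_pair and r=1,
        OF _ _ _ _ _ _ content_pair_of_vec_image_cbox assms])
    show "isCont pair_of_vec x" for x
      unfolding pair_of_vec_def by (intro continuous_intros)
    show "\<exists>w z. pair_of_vec ` cbox u v = cbox w z" for u v
      by (metis pair_of_vec_image_cbox)
    show "\<exists>w z. vec_of_pair ` cbox u v = cbox w z" for u v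
      by (metis vec_of_pair_image_cbox)
  qed auto
  then show ?thesis
    unfolding vec_of_pair_image_cbox by (simp add: vec_of_pair_def)
qed

definition polar :: "real^2 \<Rightarrow> real^2" where
  "polar x = (x$1 * cos (x$2)) *\<^sub>R axis 1 1 + (x$1 * sin (x$2)) *\<^sub>R axis 2 1"

definition polar_derivative :: "real^2 \<Rightarrow> real^2 \<Rightarrow> real^2" where
  "polar_derivative x h =
     (h$1 * cos (x$2) - x$1 * sin (x$2) * h$2) *\<^sub>R axis 1 1
   + (h$1 * sin (x$2) + x$1 * cos (x$2) * h$2) *\<^sub>R axis 2 1"

lemma has_derivative_vec_nth [derivative_intros]: "((\<lambda>x. x $ i) has_derivative (\<lambda>h. h $ i)) F"
  by (rule bounded_linear_imp_has_derivative) (rule bounded_linear_vec_nth)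

lemma polar_has_derivative: "(polar has_derivative polar_derivative x) (at x within S)"
  unfolding polar_def polar_derivative_def
  by (auto intro!: derivative_eq_intros ext simp: algebra_simps)

lemma det_polar_derivative: "det (matrix (polar_derivative x)) = x$1"
proof -
  have "a * (cos t * cos t) + a * (sin t * sin t) = a" for a t :: real
    by (metis distrib_left mult.right_neutral power2_eq_square sin_cos_squared_add2)
  then show ?thesis
    by (simp add: det_2 matrix_def polar_derivative_def axis_def algebra_simps)
qed

lemma complex_of_vec_polar: "complex_of_vec (polar x) = of_real (x$1) * cis (x$2)"
  by (simp add: complex_of_vec_def polar_def complex_eq_iff axis_def)

lemma norm_polar: "norm (polar x) = \<bar>x$1\<bar>"
  by (metis norm_complex_of_vec complex_of_vec_polar norm_mult norm_of_real norm_cis mult_1_right)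

lemma continuous_on_polar: "continuous_on S polar"
  unfolding polar_def by (intro continuous_intros)

lemma Arg2pi_complex_of_vec_polar:
  fixes x :: "real^2"
  assumes "0 < x$1" "0 \<le> x$2" "x$2 < 2 * pi"
  shows "Arg2pi (complex_of_vec (polar x)) = x$2"
  using assms by (intro Arg2pi_unique[of "x$1"]) (simp_all add: complex_of_vec_polar cis_conv_exp)

lemma inj_on_polar: "inj_on polar (box (vector [0, 0]) (vector [\<rho>, 2 * pi]))"
proof (rule inj_onI)
  fix x y :: "real^2"
  assume "x \<in> box (vector [0, 0]) (vector [\<rho>, 2 * pi])" "y \<in> box (vector [0, 0]) (vector [\<rho>, 2 * pi])"
  then have x: "0 < x$1" "0 < x$2" "x$2 < 2 * pi" and y: "0 < y$1" "0 < y$2" "y$2 < 2 * pi"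
    by (auto simp: mem_box_cart forall_2)
  assume eq: "polar x = polar y"
  then have "x$1 = y$1"
    using x y norm_polar by (metis abs_of_pos)
  moreover have "x$2 = y$2"
    using eq Arg2pi_complex_of_vec_polar x y by (metis less_imp_le)
  ultimately show "x = y"
    by (simp add: vec_eq_iff forall_2)
qed

lemma polar_image_subset_ball: "polar ` box (vector [0, 0]) (vector [\<rho>, 2 * pi]) \<subseteq> ball 0 \<rho>"
  by (auto simp: mem_box_cart forall_2 norm_polar)

lemma ball_diff_polar_image_subset:
  "ball 0 \<rho> - polar ` box (vector [0, 0]) (vector [\<rho>, 2 * pi]) \<subseteq> {x. x$2 = 0}"
proof
  fix y :: "real^2"
  assume y: "y \<in> ball 0 \<rho> - polar ` box (vector [0, 0]) (vector [\<rho>, 2 * pi])"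
  show "y \<in> {x. x$2 = 0}"
  proof (rule ccontr)
    assume "y \<notin> {x. x$2 = 0}"
    define z where "z = complex_of_vec y"
    have "Im z \<noteq> 0"
      using \<open>y \<notin> {x. x$2 = 0}\<close> by (simp add: z_def complex_of_vec_def)
    then have "z \<noteq> 0" "Arg2pi z \<noteq> 0"
      using Arg2pi_eq_0[of z] by (auto simp: complex_is_Real_iff)
    have "norm z < \<rho>"
      using y by (simp add: z_def)
    have Arg: "0 \<le> Arg2pi z" "Arg2pi z < 2 * pi" "z = of_real (norm z) * exp (\<i> * of_real (Arg2pi z))"
      using Arg2pi[of z] by (auto simp: is_Arg_def)
    define x :: "real^2" where "x = vector [norm z, Arg2pi z]"
    have "x \<in> box (vector [0, 0]) (vector [\<rho>, 2 * pi])"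
      using Arg \<open>Arg2pi z \<noteq> 0\<close> \<open>z \<noteq> 0\<close> \<open>norm z < \<rho>\<close> by (auto simp: x_def mem_box_cart forall_2)
    moreover have "polar x = y"
      using Arg(3) complex_of_vec_polar[of x] vec_of_complex_of_vec
      by (metis x_def z_def cis_conv_exp vector_2 mult.commute)
    ultimately show False
      using y by auto
  qed
qed

lemma has_integral_ball_of_polar_image:
  fixes f :: "real^2 \<Rightarrow> 'a::banach"
  assumes "(f has_integral I) (polar ` box (vector [0, 0]) (vector [\<rho>, 2 * pi]))"
  shows "(f has_integral I) (ball 0 \<rho>)"
  using assms
proof (rule has_integral_spike_set_eq[THEN iffD1, rotated 2])
  have "{y \<in> polar ` box (vector [0, 0]) (vector [\<rho>, 2 * pi]) - ball 0 \<rho>. f y \<noteq> 0} = {}"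
    using polar_image_subset_ball[of \<rho>] by auto
  then show "negligible {y \<in> polar ` box (vector [0, 0]) (vector [\<rho>, 2 * pi]) - ball 0 \<rho>. f y \<noteq> 0}"
    by (metis negligible_empty)
  show "negligible {y \<in> ball 0 \<rho> - polar ` box (vector [0, 0]) (vector [\<rho>, 2 * pi]). f y \<noteq> 0}"
    by (rule negligible_subset[OF negligible_standard_hyperplane_cart[of 2]])
       (use ball_diff_polar_image_subset[of \<rho>] in auto)
qed

lemma has_integral_polar_vec:
  fixes \<phi> :: "real^2 \<Rightarrow> real"
  assumes cont: "continuous_on (cball 0 \<rho>) \<phi>"
  shows "(\<phi> has_integral integral (cbox (vector [0, 0]) (vector [\<rho>, 2 * pi])) (\<lambda>x. x$1 * \<phi> (polar x)))
           (ball 0 \<rho>)"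
proof -
  define S :: "(real^2) set" where "S = box (vector [0, 0]) (vector [\<rho>, 2 * pi])"
  define C :: "(real^2) set" where "C = cbox (vector [0, 0]) (vector [\<rho>, 2 * pi])"
  define K where "K x = \<bar>x$1\<bar> * \<phi> (polar x)" for x
  have "continuous_on C K"
    unfolding K_def
    by (intro continuous_intros continuous_on_compose2[OF cont continuous_on_polar])
       (auto simp: C_def mem_box_cart forall_2 norm_polar)
  then have K_int: "K absolutely_integrable_on S"
    using absolutely_integrable_continuous absolutely_integrable_on_open_interval
    unfolding C_def S_def by blast
  \<comment> \<open>change of variables is only available for vector-valued integrands\<close>
  then have vec_K_int: "(vec \<circ> K) absolutely_integrable_on S"
    by (rule absolutely_integrable_linear) (simp add: linear_conv_bounded_linear[symmetric])
  have jacobian: "(\<lambda>x. \<bar>det (matrix (polar_derivative x))\<bar> *\<^sub>R vec (\<phi> (polar x))) = vec \<circ> K"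
    by (simp add: fun_eq_iff det_polar_derivative K_def vec_eq_iff)
  have "(\<lambda>y. vec (\<phi> y) :: real^1) absolutely_integrable_on polar ` S
      \<and> integral (polar ` S) (\<lambda>y. vec (\<phi> y) :: real^1) = integral S (vec \<circ> K)"
    using has_absolute_integral_change_of_variables[of S polar polar_derivative "\<lambda>y. vec (\<phi> y)"
        "integral S (vec \<circ> K)"] vec_K_int
    unfolding jacobian by (auto simp: S_def inj_on_polar polar_has_derivative)
  then have "((\<lambda>y. vec (\<phi> y) :: real^1) has_integral integral S (vec \<circ> K)) (polar ` S)"
    by (metis absolutely_integrable_on_def has_integral_iff)
  then have "((\<lambda>y. vec (\<phi> y) :: real^1) has_integral integral S (vec \<circ> K)) (ball 0 \<rho>)"
    unfolding S_def by (rule has_integral_ball_of_polar_image)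
  from has_integral_linear[OF this bounded_linear_vec_nth[of 1]]
  have "(\<phi> has_integral integral S (vec \<circ> K :: _ \<Rightarrow> real^1) $ 1) (ball 0 \<rho>)"
    by (simp add: o_def)
  moreover have "integral S (vec \<circ> K :: _ \<Rightarrow> real^1) $ 1 = integral S K"
  proof -
    have "(K has_integral integral S K) S"
      using K_int by (simp add: absolutely_integrable_on_def has_integral_integral)
    then have "((vec \<circ> K :: _ \<Rightarrow> real^1) has_integral vec (integral S K)) S"
      by (rule has_integral_linear) (simp add: linear_conv_bounded_linear[symmetric])
    then show ?thesis
      by (simp add: integral_unique)
  qed
  moreover have "integral S K = integral C (\<lambda>x. x$1 * \<phi> (polar x))"
    unfolding S_def C_def integral_open_interval
    by (rule integral_cong) (auto simp: K_def mem_box_cart forall_2)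
  ultimately show ?thesis
    by (simp add: C_def)
qed

lemma continuous_on_compose_polar:
  assumes "continuous_on D g" "continuous_on S r" "continuous_on S \<theta>"
    and "\<And>x. x \<in> S \<Longrightarrow> of_real (r x) * cis (\<theta> x) \<in> D"
  shows "continuous_on S (\<lambda>x. g (of_real (r x) * cis (\<theta> x)))"
proof (rule continuous_on_compose2[OF assms(1)])
  show "continuous_on S (\<lambda>x. of_real (r x) * cis (\<theta> x))"
    unfolding cis_conv_exp using assms(2,3) by (intro continuous_intros)
qed (use assms(4) in auto)

theorem has_integral_polar:
  fixes u :: "complex \<Rightarrow> real"
  assumes cont: "continuous_on (cball 0 \<rho>) u"
  shows "(u has_integral integral {0..\<rho>} (\<lambda>s. s * integral {0..2 * pi} (\<lambda>t. u (of_real s * cis t))))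
           (ball 0 \<rho>)"
proof -
  define \<Psi> where "\<Psi> = (\<lambda>(s, t). s * u (of_real s * cis t))"
  have "continuous_on (cbox (0, 0) (\<rho>, 2 * pi)) (\<lambda>x. fst x * u (of_real (fst x) * cis (snd x)))"
    by (intro continuous_intros continuous_on_compose_polar[OF cont])
       (auto simp: norm_mult cbox_Pair_iff)
  then have cont_\<Psi>: "continuous_on (cbox (0, 0) (\<rho>, 2 * pi)) \<Psi>"
    by (simp add: \<Psi>_def case_prod_beta)
  define I where "I = integral (cbox (0, 0) (\<rho>, 2 * pi)) \<Psi>"
  have "(\<Psi> has_integral I) (cbox (0, 0) (\<rho>, 2 * pi))"
    unfolding I_def using cont_\<Psi> integrable_continuous has_integral_integral by blast
  from has_integral_pair_of_vec[OF this]
  have "((\<lambda>x. x$1 * u (complex_of_vec (polar x))) has_integral I) (cbox (vector [0, 0]) (vector [\<rho>, 2 * pi]))"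
    by (simp add: \<Psi>_def pair_of_vec_def complex_of_vec_polar)
  then have "integral (cbox (vector [0, 0]) (vector [\<rho>, 2 * pi])) (\<lambda>x. x$1 * u (complex_of_vec (polar x))) = I"
    by (rule integral_unique)
  moreover have "continuous_on (cball 0 \<rho>) (\<lambda>x. u (complex_of_vec x))"
    by (rule continuous_on_compose2[OF cont linear_continuous_on[OF bounded_linear_complex_of_vec]]) auto
  ultimately have "((\<lambda>x. u (complex_of_vec x)) has_integral I) (ball 0 \<rho>)"
    using has_integral_polar_vec by fastforce
  from has_integral_ball_vec_of_complex[OF this]
  have "(u has_integral I) (ball 0 \<rho>)"
    by simp
  moreover have "I = integral {0..\<rho>} (\<lambda>s. s * integral {0..2 * pi} (\<lambda>t. u (of_real s * cis t)))"
    unfolding I_def integral_prod_continuous[OF cont_\<Psi>] by (simp add: \<Psi>_def)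
  ultimately show ?thesis
    by simp
qed

section \<open>Convexity inequalities for powers\<close>

lemma powr_ge_tangent_line:
  fixes a x p :: real
  assumes p: "p \<ge> 1" and a: "a \<ge> 0" and x: "x \<ge> 0"
  shows "a powr p + p * a powr (p - 1) * (x - a) \<le> x powr p"
proof (cases "a = 0 \<or> x = 0")
  case True
  have "a powr (p - 1) * a = a powr p"
    using a by (cases "a = 0") (simp_all add: powr_diff)
  then show ?thesis
    using True p x mult_right_mono[OF p powr_ge_zero[of a p]] by (auto simp: algebra_simps)
next
  case False
  then have "0 < a" "0 < x"
    using a x by auto
  have "p * a powr (p - 1) * (x - a) \<le> x powr p - a powr p"
  proof (rule f''_imp_f'[where C="{0<..}" and f="\<lambda>x. x powr p" and f''="\<lambda>x. p * ((p - 1) * x powr (p - 1 - 1))"])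
    show "((\<lambda>x. x powr p) has_real_derivative p * y powr (p - 1)) (at y)" if "y \<in> {0<..}" for y
      using that by (auto intro!: derivative_eq_intros)
    show "((\<lambda>x. p * x powr (p - 1)) has_real_derivative p * ((p - 1) * y powr (p - 1 - 1))) (at y)"
      if "y \<in> {0<..}" for y
      using that by (auto intro!: derivative_eq_intros)
  qed (use p \<open>0 < a\<close> \<open>0 < x\<close> in auto)
  then show ?thesis
    by simp
qed

lemma powr_weighted_integral_le:
  fixes W X :: "real \<Rightarrow> real"
  assumes p: "p \<ge> 1"
    and WX: "(\<lambda>t. W t * X t) integrable_on S"
    and WXp: "(\<lambda>t. W t * X t powr p) integrable_on S"
    and W: "(W has_integral 1) S"
    and nonneg: "\<And>t. t \<in> S \<Longrightarrow> W t \<ge> 0 \<and> X t \<ge> 0"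
  shows "(integral S (\<lambda>t. W t * X t)) powr p \<le> integral S (\<lambda>t. W t * X t powr p)"
proof -
  define a where "a = integral S (\<lambda>t. W t * X t)"
  define c where "c = p * a powr (p - 1)"
  have "a \<ge> 0"
    unfolding a_def by (rule integral_nonneg[OF WX]) (use nonneg in auto)
  \<comment> \<open>integrate the tangent line of the power function at the mean value\<close>
  have "((\<lambda>t. a powr p * W t + c * (W t * X t) - c * a * W t) has_integral
      (a powr p * 1 + c * a - c * a * 1)) S"
    by (intro has_integral_diff has_integral_add has_integral_mult_right W)
       (use WX in \<open>simp add: a_def has_integral_integral\<close>)
  then have tangent: "((\<lambda>t. a powr p * W t + c * (W t * X t) - c * a * W t) has_integral a powr p) S"
    by simp
  have "a powr p \<le> integral S (\<lambda>t. W t * X t powr p)"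
  proof (rule has_integral_le[OF tangent integrable_integral[OF WXp]])
    fix t
    assume "t \<in> S"
    then have "W t * (a powr p + c * (X t - a)) \<le> W t * X t powr p"
      using powr_ge_tangent_line[OF p \<open>a \<ge> 0\<close>, of "X t"] nonneg unfolding c_def
      by (intro mult_left_mono) auto
    then show "a powr p * W t + c * (W t * X t) - c * a * W t \<le> W t * X t powr p"
      by (simp add: algebra_simps)
  qed
  then show ?thesis
    by (simp add: a_def)
qed

lemma powr_integral_le_integral_powr:
  fixes X :: "real \<Rightarrow> real"
  assumes p: "p \<ge> 1" and ab: "a < b" "b - a \<le> 1" and X: "continuous_on {a..b} X"
    and nonneg: "\<And>s. s \<in> {a..b} \<Longrightarrow> X s \<ge> 0"
  shows "(integral {a..b} X) powr p \<le> integral {a..b} (\<lambda>s. X s powr p)"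
proof -
  define L where "L = b - a"
  define I where "I = integral {a..b} X"
  define J where "J = integral {a..b} (\<lambda>s. X s powr p)"
  have Xp: "continuous_on {a..b} (\<lambda>s. X s powr p)"
    by (rule continuous_on_powr'[OF X continuous_on_const]) (use p nonneg in auto)
  have "I \<ge> 0" "J \<ge> 0"
    unfolding I_def J_def using nonneg
    by (auto intro!: integral_nonneg integrable_continuous_interval X Xp)
  have W1: "((\<lambda>s. 1 / L) has_integral 1) {a..b}"
    using has_integral_const_real[of "1 / L" a b] ab by (simp add: L_def)
  have "(integral {a..b} (\<lambda>s. 1 / L * X s)) powr p \<le> integral {a..b} (\<lambda>s. 1 / L * X s powr p)"
    by (rule powr_weighted_integral_le[OF p _ _ W1])
       (use ab nonneg in \<open>auto simp: L_def intro!: integrable_continuous_interval continuous_intros X Xp\<close>)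
  then have "(I / L) powr p \<le> J / L"
    by (simp add: I_def J_def)
  then have "I powr p \<le> L powr p * (J / L)"
    using \<open>I \<ge> 0\<close> ab by (simp add: powr_divide divide_le_eq mult.commute L_def)
  also have "\<dots> = L powr (p - 1) * J"
    using ab by (simp add: powr_diff L_def)
  also have "\<dots> \<le> J"
    using ab p \<open>J \<ge> 0\<close> mult_right_mono[OF powr_le1[of "p - 1" L], of J] by (simp add: L_def)
  finally show ?thesis
    by (simp add: I_def J_def)
qed

lemma powr_convex_combination_le:
  fixes x y l p :: real
  assumes p: "p \<ge> 1" and l: "0 \<le> l" "l \<le> 1" and xy: "x \<ge> 0" "y \<ge> 0"
  shows "(l * x + (1 - l) * y) powr p \<le> l * x powr p + (1 - l) * y powr p"
proof -
  define m where "m = l * x + (1 - l) * y"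
  define c where "c = p * m powr (p - 1)"
  have "m \<ge> 0"
    unfolding m_def using l xy by simp
  have "l * (m powr p + c * (x - m)) + (1 - l) * (m powr p + c * (y - m)) \<le> l * x powr p + (1 - l) * y powr p"
    using powr_ge_tangent_line[OF p \<open>m \<ge> 0\<close>] l xy unfolding c_def
    by (intro add_mono mult_left_mono) auto
  moreover have "l * (m powr p + c * (x - m)) + (1 - l) * (m powr p + c * (y - m)) = m powr p"
    unfolding m_def by (simp add: algebra_simps)
  ultimately show ?thesis
    by (simp add: m_def)
qed

lemma powr_add_le_convex_bound:
  fixes c h \<beta> q :: real
  assumes q: "q \<ge> 1" and "0 \<le> c" "0 < \<beta>" "0 \<le> h"
  shows "(c + h) powr q \<le> (c + \<beta>) powr q * (c / (c + \<beta>) + \<beta> / (c + \<beta>) * (h powr q / \<beta> powr q))"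
proof -
  define l where "l = c / (c + \<beta>)"
  have l: "0 \<le> l" "l \<le> 1" "1 - l = \<beta> / (c + \<beta>)"
    using assms by (auto simp: l_def field_simps)
  have "c + \<beta> > 0"
    using assms by simp
  then have "(c + \<beta>) * l = c" "(c + \<beta>) * (1 - l) = \<beta>"
    by (simp_all only: l(3)) (simp_all add: l_def)
  then have "c + h = (c + \<beta>) * (l * 1 + (1 - l) * (h / \<beta>))"
    using assms by (simp add: distrib_left mult.assoc[symmetric])
  then have "(c + h) powr q = (c + \<beta>) powr q * (l * 1 + (1 - l) * (h / \<beta>)) powr q"
    using assms l by (simp add: powr_mult)
  also have "\<dots> \<le> (c + \<beta>) powr q * (l * 1 powr q + (1 - l) * (h / \<beta>) powr q)"
    using assms l by (intro mult_left_mono powr_convex_combination_le) auto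
  also have "l * 1 powr q + (1 - l) * (h / \<beta>) powr q = c / (c + \<beta>) + \<beta> / (c + \<beta>) * (h powr q / \<beta> powr q)"
    using assms by (simp only: l(3)) (simp add: l_def powr_divide)
  finally show ?thesis .
qed

lemma mean_powr_le_add_const_powr:
  fixes F H :: "real \<Rightarrow> real"
  assumes q: "q \<ge> 1" and ab: "a < b" and c: "0 \<le> c" and \<beta>: "0 < \<beta>"
    and F: "continuous_on {a..b} F" and H: "continuous_on {a..b} H"
    and F_le: "\<And>t. t \<in> {a..b} \<Longrightarrow> 0 \<le> F t \<and> F t \<le> c + H t"
    and H_nonneg: "\<And>t. t \<in> {a..b} \<Longrightarrow> 0 \<le> H t"
    and H_mean: "integral {a..b} (\<lambda>t. H t powr q) / (b - a) \<le> \<beta> powr q"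
  shows "integral {a..b} (\<lambda>t. F t powr q) / (b - a) \<le> (c + \<beta>) powr q"
proof -
  define A where "A = (c + \<beta>) powr q * (c / (c + \<beta>))"
  define K where "K = (c + \<beta>) powr q * (\<beta> / (c + \<beta>)) / \<beta> powr q"
  define I where "I = integral {a..b} (\<lambda>t. H t powr q)"
  have Fq: "continuous_on {a..b} (\<lambda>t. F t powr q)"
    by (rule continuous_on_powr'[OF F continuous_on_const]) (use q F_le in auto)
  have Hq: "continuous_on {a..b} (\<lambda>t. H t powr q)"
    by (rule continuous_on_powr'[OF H continuous_on_const]) (use q H_nonneg in auto)
  have pointwise: "F t powr q \<le> A + K * H t powr q"
    if "t \<in> {a..b}" for t
  proof -
    have "F t powr q \<le> (c + H t) powr q"
      using F_le[OF that] q by (intro powr_mono2) auto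
    also have "\<dots> \<le> (c + \<beta>) powr q * (c / (c + \<beta>) + \<beta> / (c + \<beta>) * (H t powr q / \<beta> powr q))"
      using powr_add_le_convex_bound[OF q c \<beta> H_nonneg[OF that]] .
    finally show ?thesis
      by (simp add: A_def K_def algebra_simps)
  qed
  have "((\<lambda>t. A + K * H t powr q) has_integral A * (b - a) + K * I) {a..b}"
    unfolding I_def using ab
    by (intro has_integral_add has_integral_mult_right has_integral_const_real[THEN has_integral_eq_rhs]
        integrable_integral integrable_continuous_interval Hq) auto
  then have "integral {a..b} (\<lambda>t. F t powr q) \<le> A * (b - a) + K * I"
    using pointwise by (intro has_integral_le[OF integrable_integral] integrable_continuous_interval Fq) auto
  then have "integral {a..b} (\<lambda>t. F t powr q) / (b - a) \<le> (A * (b - a) + K * I) / (b - a)"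
    using ab by (intro divide_right_mono) auto
  also have "\<dots> = A + K * (I / (b - a))"
    using ab by (simp add: add_divide_distrib)
  also have "\<dots> \<le> A + K * \<beta> powr q"
    using H_mean \<beta> c by (intro add_left_mono mult_left_mono) (auto simp: K_def I_def)
  also have "\<dots> = (c + \<beta>) powr q * (c / (c + \<beta>)) + (c + \<beta>) powr q * (\<beta> / (c + \<beta>))"
    using \<beta> by (simp add: A_def K_def)
  also have "\<dots> = (c + \<beta>) powr q"
    using \<beta> c by (simp only: distrib_left[symmetric] add_divide_distrib[symmetric]) simp
  finally show ?thesis .
qed

lemma Minkowski_add_const_integral_powr:
  fixes F H :: "real \<Rightarrow> real"
  assumes q: "q \<ge> 1" and ab: "a < b" and c: "0 \<le> c"
    and F: "continuous_on {a..b} F" and H: "continuous_on {a..b} H"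
    and F_le: "\<And>t. t \<in> {a..b} \<Longrightarrow> 0 \<le> F t \<and> F t \<le> c + H t"
    and H_nonneg: "\<And>t. t \<in> {a..b} \<Longrightarrow> 0 \<le> H t"
  shows "(integral {a..b} (\<lambda>t. F t powr q) / (b - a)) powr (1 / q)
           \<le> c + (integral {a..b} (\<lambda>t. H t powr q) / (b - a)) powr (1 / q)"
proof (rule field_le_epsilon)
  fix e :: real
  assume "e > 0"
  define m where "m = integral {a..b} (\<lambda>t. H t powr q) / (b - a)"
  define \<beta> where "\<beta> = m powr (1 / q) + e"
  have "\<beta> > 0"
    using \<open>e > 0\<close> by (simp add: \<beta>_def add_nonneg_pos)
  have "0 \<le> m"
    unfolding m_def using ab H_nonneg q
    by (auto intro!: divide_nonneg_nonneg integral_nonneg integrable_continuous_interval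
        continuous_on_powr' H continuous_on_const)
  then have "m = (m powr (1 / q)) powr q"
    using q by (simp add: powr_powr)
  also have "\<dots> \<le> \<beta> powr q"
    using \<open>e > 0\<close> q by (intro powr_mono2) (auto simp: \<beta>_def)
  finally have "integral {a..b} (\<lambda>t. F t powr q) / (b - a) \<le> (c + \<beta>) powr q"
    unfolding m_def by (intro mean_powr_le_add_const_powr[OF q ab c \<open>\<beta> > 0\<close> F H F_le H_nonneg])
  then have "(integral {a..b} (\<lambda>t. F t powr q) / (b - a)) powr (1 / q) \<le> ((c + \<beta>) powr q) powr (1 / q)"
    using ab F_le q
    by (intro powr_mono2 divide_nonneg_nonneg integral_nonneg integrable_continuous_interval
        continuous_on_powr' F continuous_on_const) auto
  also have "\<dots> = c + \<beta>"
    using \<open>\<beta> > 0\<close> c q by (simp add: powr_powr)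
  finally show "(integral {a..b} (\<lambda>t. F t powr q) / (b - a)) powr (1 / q) \<le> c + m powr (1 / q) + e"
    by (simp add: \<beta>_def)
qed

lemma Chebyshev_integral_increasing:
  fixes M :: "real \<Rightarrow> real"
  assumes \<rho>: "0 < \<rho>" and M: "continuous_on {0..\<rho>} M"
    and mono: "\<And>x y. 0 \<le> x \<Longrightarrow> x \<le> y \<Longrightarrow> y \<le> \<rho> \<Longrightarrow> M x \<le> M y"
  shows "integral {0..\<rho>} M \<le> (2 / \<rho>) * integral {0..\<rho>} (\<lambda>s. s * M s)"
proof -
  define m where "m = M (\<rho> / 2)"
  have "((\<lambda>s. 2 / \<rho> * s - 1) has_integral (1 / \<rho> * \<rho>\<^sup>2 - \<rho>) - (1 / \<rho> * 0\<^sup>2 - 0)) {0..\<rho>}"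
    using \<rho> by (intro fundamental_theorem_of_calculus)
      (auto intro!: derivative_eq_intros simp: has_real_derivative_iff_has_vector_derivative[symmetric]
        field_simps power2_eq_square)
  then have centered: "((\<lambda>s. 2 / \<rho> * s - 1) has_integral 0) {0..\<rho>}"
    using \<rho> by (simp add: power2_eq_square)
  \<comment> \<open>both factors change sign at \<open>\<rho> / 2\<close>\<close>
  have "0 \<le> integral {0..\<rho>} (\<lambda>s. (M s - m) * (2 / \<rho> * s - 1))"
  proof (rule integral_nonneg)
    show "(\<lambda>s. (M s - m) * (2 / \<rho> * s - 1)) integrable_on {0..\<rho>}"
      by (intro integrable_continuous_interval continuous_intros M)
    fix s
    assume s: "s \<in> {0..\<rho>}"
    show "0 \<le> (M s - m) * (2 / \<rho> * s - 1)"
    proof (cases "s \<le> \<rho> / 2")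
      case True
      then have "M s \<le> m" "2 / \<rho> * s - 1 \<le> 0"
        unfolding m_def using s \<rho> by (auto intro: mono simp: field_simps)
      then show ?thesis
        by (simp add: mult_nonpos_nonpos)
    next
      case False
      then have "m \<le> M s" "2 / \<rho> * s - 1 \<ge> 0"
        unfolding m_def using s \<rho> by (auto intro: mono simp: field_simps)
      then show ?thesis
        by simp
    qed
  qed
  also have "integral {0..\<rho>} (\<lambda>s. (M s - m) * (2 / \<rho> * s - 1))
      = (2 / \<rho>) * integral {0..\<rho>} (\<lambda>s. s * M s) - integral {0..\<rho>} M - m * 0"
  proof -
    have "((\<lambda>s. (2 / \<rho>) * (s * M s) - M s - m * (2 / \<rho> * s - 1)) has_integral
           (2 / \<rho>) * integral {0..\<rho>} (\<lambda>s. s * M s) - integral {0..\<rho>} M - m * 0) {0..\<rho>}"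
      by (intro has_integral_diff has_integral_mult_right centered integrable_integral
          integrable_continuous_interval continuous_intros M)
    moreover have "(\<lambda>s. (2 / \<rho>) * (s * M s) - M s - m * (2 / \<rho> * s - 1)) = (\<lambda>s. (M s - m) * (2 / \<rho> * s - 1))"
      using \<rho> by (auto simp: fun_eq_iff field_simps)
    ultimately show ?thesis
      by (simp add: integral_unique)
  qed
  finally show ?thesis
    by simp
qed

section \<open>Poisson kernel and monotonicity of integral means\<close>

definition poisson_kernel :: "real \<Rightarrow> complex \<Rightarrow> real \<Rightarrow> real" where
  "poisson_kernel r w \<theta> = (r\<^sup>2 - (norm w)\<^sup>2) / (norm (of_real r * cis \<theta> - w))\<^sup>2"

lemma poisson_kernel_nonneg: "norm w \<le> r \<Longrightarrow> 0 \<le> poisson_kernel r w \<theta>"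
  unfolding poisson_kernel_def by (intro divide_nonneg_nonneg) (auto intro: power_mono)

lemma norm_rcis_diff_swap:
  "norm (of_real r * cis a - of_real s * cis b) = norm (of_real r * cis b - of_real s * cis a)"
proof -
  have "cis (a + b) * cis (- b) = cis a" "cis (a + b) * cis (- a) = cis b"
    by (simp_all add: cis_mult)
  moreover have "cis (a + b) * cnj (of_real r * cis b - of_real s * cis a)
      = of_real r * (cis (a + b) * cis (- b)) - of_real s * (cis (a + b) * cis (- a))"
    by (simp only: cis_cnj complex_cnj_diff complex_cnj_mult complex_cnj_complex_of_real
        right_diff_distrib mult.left_commute)
  ultimately have "of_real r * cis a - of_real s * cis b = cis (a + b) * cnj (of_real r * cis b - of_real s * cis a)"
    by simp
  then show ?thesis
    by (simp only: norm_mult norm_cis complex_mod_cnj mult_1)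
qed

lemma poisson_kernel_swap:
  "0 \<le> s \<Longrightarrow> poisson_kernel r (of_real s * cis t) \<theta> = poisson_kernel r (of_real s * cis \<theta>) t"
  unfolding poisson_kernel_def by (simp add: norm_mult norm_rcis_diff_swap)

text \<open>The Poisson kernel is the Cauchy kernel plus the Cauchy kernel of the point reflected
  in the circle, which contributes nothing by Cauchy's theorem.\<close>

lemma poisson_kernel_eq_cauchy_kernels:
  fixes \<zeta> w :: complex
  assumes "norm \<zeta> = r" "\<zeta> \<noteq> w" "\<zeta> \<noteq> 0"
  shows "\<zeta> / (\<zeta> - w) + cnj w * \<zeta> / (of_real (r\<^sup>2) - cnj w * \<zeta>)
       = of_real ((r\<^sup>2 - (norm w)\<^sup>2) / (norm (\<zeta> - w))\<^sup>2)"
proof -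
  have r2: "of_real (r\<^sup>2) = \<zeta> * cnj \<zeta>"
    using assms(1) complex_norm_square[of \<zeta>] by simp
  have "cnj (\<zeta> - w) \<noteq> 0" "\<zeta> - w \<noteq> 0"
    using assms by auto
  have "of_real (r\<^sup>2) - cnj w * \<zeta> = \<zeta> * cnj (\<zeta> - w)"
    unfolding r2 by (simp add: algebra_simps)
  moreover have "cnj w * \<zeta> / (\<zeta> * cnj (\<zeta> - w)) = cnj w / cnj (\<zeta> - w)"
    using assms(3) by (metis mult.commute mult_divide_mult_cancel_left)
  ultimately have "\<zeta> / (\<zeta> - w) + cnj w * \<zeta> / (of_real (r\<^sup>2) - cnj w * \<zeta>)
      = \<zeta> / (\<zeta> - w) + cnj w / cnj (\<zeta> - w)"
    by simp
  also have "\<dots> = (\<zeta> * cnj (\<zeta> - w) + cnj w * (\<zeta> - w)) / ((\<zeta> - w) * cnj (\<zeta> - w))"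
    using \<open>cnj (\<zeta> - w) \<noteq> 0\<close> \<open>\<zeta> - w \<noteq> 0\<close> by (simp add: field_simps)
  also have "\<dots> = (of_real (r\<^sup>2) - of_real ((norm w)\<^sup>2)) / of_real ((norm (\<zeta> - w))\<^sup>2)"
    unfolding r2 complex_norm_square[of w] complex_norm_square[of "\<zeta> - w"] by (simp add: algebra_simps)
  finally show ?thesis
    by simp
qed

lemma reflected_cauchy_kernel_has_contour_integral_0:
  fixes g :: "complex \<Rightarrow> complex"
  assumes holg: "g holomorphic_on cball 0 r" and w: "norm w < r"
  shows "((\<lambda>u. g u * cnj w / (of_real (r\<^sup>2) - cnj w * u)) has_contour_integral 0) (circlepath 0 r)"
proof (rule Cauchy_theorem_convex_simple)
  have "of_real (r\<^sup>2) - cnj w * u \<noteq> 0" if "u \<in> cball 0 r" for u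
  proof -
    have "norm (cnj w * u) \<le> norm w * r"
      using that by (simp add: norm_mult mult_left_mono)
    also have "\<dots> < r\<^sup>2"
      using w le_less_trans[OF norm_ge_zero w] by (simp add: power2_eq_square)
    finally show ?thesis
      by (metis abs_of_nonneg norm_of_real order.irrefl right_minus_eq zero_le_power2)
  qed
  then show "(\<lambda>u. g u * cnj w / (of_real (r\<^sup>2) - cnj w * u)) holomorphic_on cball 0 r"
    using holg by (intro holomorphic_intros) auto
qed (use le_less_trans[OF norm_ge_zero w] in auto)

theorem Poisson_integral_formula:
  fixes g :: "complex \<Rightarrow> complex"
  assumes holg: "g holomorphic_on cball 0 r" and w: "norm w < r"
  shows "((\<lambda>\<theta>. of_real (poisson_kernel r w \<theta>) * g (of_real r * cis \<theta>)) has_integral 2 * pi * g w) {0..2*pi}"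
proof -
  have "0 < r"
    using w norm_ge_zero[of w] by linarith
  define k where "k u = g u * cnj w / (of_real (r\<^sup>2) - cnj w * u)" for u
  have "(k has_contour_integral 0) (circlepath 0 r)"
    unfolding k_def by (rule reflected_cauchy_kernel_has_contour_integral_0[OF holg w])
  then have k_int: "((\<lambda>t. k (of_real r * cis t) * of_real r * \<i> * cis t) has_integral 0) {0..2*pi}"
    unfolding circlepath_def by (subst (asm) has_contour_integral_part_circlepath_iff) auto
  have "((\<lambda>u. g u / (u - w)) has_contour_integral (2 * of_real pi * \<i> * g w)) (circlepath 0 r)"
    by (rule Cauchy_integral_circlepath_simple[OF holg]) (use w in simp)
  then have g_int: "((\<lambda>t. g (of_real r * cis t) / (of_real r * cis t - w) * of_real r * \<i> * cis t)
      has_integral (2 * of_real pi * \<i> * g w)) {0..2*pi}"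
    unfolding circlepath_def by (subst (asm) has_contour_integral_part_circlepath_iff) auto
  have "((\<lambda>t. (g (of_real r * cis t) / (of_real r * cis t - w) * of_real r * \<i> * cis t
        + k (of_real r * cis t) * of_real r * \<i> * cis t) / \<i>)
      has_integral (2 * of_real pi * \<i> * g w + 0) / \<i>) {0..2*pi}"
    by (intro has_integral_divide has_integral_add g_int k_int)
  moreover have "(g (of_real r * cis t) / (of_real r * cis t - w) * of_real r * \<i> * cis t
        + k (of_real r * cis t) * of_real r * \<i> * cis t) / \<i>
        = of_real (poisson_kernel r w t) * g (of_real r * cis t)" for t
  proof -
    define \<zeta> where "\<zeta> = of_real r * cis t"
    have "norm \<zeta> = r"
      using \<open>0 < r\<close> by (simp add: \<zeta>_def norm_mult)
    then have "\<zeta> \<noteq> w" "\<zeta> \<noteq> 0"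
      using w \<open>0 < r\<close> by auto
    have "(g \<zeta> / (\<zeta> - w) * of_real r * \<i> * cis t + k \<zeta> * of_real r * \<i> * cis t) / \<i>
        = g \<zeta> * (\<zeta> / (\<zeta> - w) + cnj w * \<zeta> / (of_real (r\<^sup>2) - cnj w * \<zeta>))"
      by (simp add: \<zeta>_def k_def field_simps)
    also have "\<dots> = g \<zeta> * of_real (poisson_kernel r w t)"
      by (simp only: poisson_kernel_eq_cauchy_kernels[OF \<open>norm \<zeta> = r\<close> \<open>\<zeta> \<noteq> w\<close> \<open>\<zeta> \<noteq> 0\<close>])
         (simp add: poisson_kernel_def \<zeta>_def)
    finally show ?thesis
      by (simp add: \<zeta>_def mult.commute)
  qed
  moreover have "(2 * of_real pi * \<i> * g w + 0) / \<i> = 2 * pi * g w"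
    by (simp add: field_simps)
  ultimately show ?thesis
    by (simp only:)
qed

lemma poisson_kernel_has_integral:
  assumes "norm w < r"
  shows "(poisson_kernel r w has_integral 2 * pi) {0..2*pi}"
proof -
  have "((\<lambda>\<theta>. of_real (poisson_kernel r w \<theta>) :: complex) has_integral 2 * pi) {0..2*pi}"
    using Poisson_integral_formula[of "\<lambda>_. 1" r w] assms by simp
  from has_integral_linear[OF this bounded_linear_Re] show ?thesis
    by (simp add: o_def)
qed

lemma continuous_on_norm_powr:
  fixes h :: "'a::topological_space \<Rightarrow> 'b::real_normed_vector"
  assumes "continuous_on S h" "p > 0"
  shows "continuous_on S (\<lambda>x. norm (h x) powr p)"
  by (rule continuous_on_powr'[OF continuous_on_norm[OF assms(1)] continuous_on_const]) (use assms(2) in auto)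

lemma norm_powr_le_poisson_integral:
  fixes g :: "complex \<Rightarrow> complex"
  assumes holg: "g holomorphic_on cball 0 r" and p: "p \<ge> 1" and w: "norm w < r"
  shows "norm (g w) powr p
           \<le> integral {0..2*pi} (\<lambda>\<theta>. poisson_kernel r w \<theta> / (2 * pi) * norm (g (of_real r * cis \<theta>)) powr p)"
proof -
  define W where "W = (\<lambda>\<theta>. poisson_kernel r w \<theta> / (2 * pi))"
  define X where "X = (\<lambda>\<theta>. norm (g (of_real r * cis \<theta>)))"
  have "0 < r"
    using w norm_ge_zero[of w] by linarith
  have g_circle: "continuous_on {0..2*pi} (\<lambda>\<theta>. g (of_real r * cis \<theta>))"
    using \<open>0 < r\<close>
    by (intro continuous_on_compose_polar[OF holomorphic_on_imp_continuous_on[OF holg]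
          continuous_on_const continuous_on_id]) (simp add: norm_mult)
  have "norm (of_real r * cis \<theta>) = r" for \<theta>
    using \<open>0 < r\<close> by (simp add: norm_mult)
  then have "of_real r * cis \<theta> - w \<noteq> 0" for \<theta>
    using w by force
  then have W_cont: "continuous_on {0..2*pi} W"
    unfolding W_def poisson_kernel_def cis_conv_exp by (intro continuous_intros) auto
  have X_cont: "continuous_on {0..2*pi} X"
    unfolding X_def by (rule continuous_on_norm[OF g_circle])
  have WX: "(\<lambda>\<theta>. W \<theta> * X \<theta>) integrable_on {0..2*pi}"
    by (intro integrable_continuous_interval continuous_on_mult W_cont X_cont)
  have WXp: "(\<lambda>\<theta>. W \<theta> * X \<theta> powr p) integrable_on {0..2*pi}"
    using p unfolding X_def
    by (intro integrable_continuous_interval continuous_on_mult W_cont continuous_on_norm_powr g_circle) auto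
  have W_nonneg: "0 \<le> W \<theta>" for \<theta>
    using poisson_kernel_nonneg[of w r] w by (simp add: W_def)
  have W1: "(W has_integral 1) {0..2*pi}"
    using has_integral_divide[OF poisson_kernel_has_integral[OF w], of "2 * pi"] by (simp add: W_def)
  have "((\<lambda>\<theta>. of_real (W \<theta>) * g (of_real r * cis \<theta>)) has_integral g w) {0..2*pi}"
    using has_integral_divide[OF Poisson_integral_formula[OF holg w], of "2 * pi"] by (simp add: W_def)
  then have "g w = integral {0..2*pi} (\<lambda>\<theta>. of_real (W \<theta>) * g (of_real r * cis \<theta>))"
    by (simp add: integral_unique)
  also have "norm \<dots> \<le> integral {0..2*pi} (\<lambda>\<theta>. W \<theta> * X \<theta>)"
  proof (rule integral_norm_bound_integral[OF _ WX])
    show "(\<lambda>\<theta>. of_real (W \<theta>) * g (of_real r * cis \<theta>)) integrable_on {0..2*pi}"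
      by (intro integrable_continuous_interval continuous_on_mult continuous_on_of_real W_cont g_circle)
  qed (simp add: X_def norm_mult W_nonneg)
  finally have "norm (g w) powr p \<le> (integral {0..2*pi} (\<lambda>\<theta>. W \<theta> * X \<theta>)) powr p"
    using p by (intro powr_mono2) auto
  also have "\<dots> \<le> integral {0..2*pi} (\<lambda>\<theta>. W \<theta> * X \<theta> powr p)"
    by (rule powr_weighted_integral_le[OF p WX WXp W1]) (simp add: W_nonneg X_def)
  finally show ?thesis
    by (simp add: W_def X_def)
qed

definition circle_powr_integral :: "real \<Rightarrow> (complex \<Rightarrow> complex) \<Rightarrow> real \<Rightarrow> real" where
  "circle_powr_integral p g r = integral {0..2*pi} (\<lambda>t. norm (g (of_real r * cis t)) powr p)"

lemma circle_powr_integral_mono: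
  fixes g :: "complex \<Rightarrow> complex"
  assumes holg: "g holomorphic_on cball 0 r" and p: "p \<ge> 1" and s: "0 \<le> s" "s \<le> r"
  shows "circle_powr_integral p g s \<le> circle_powr_integral p g r"
proof (cases "s = r")
  case False
  with s have "s < r"
    by simp
  define U where "U = (\<lambda>\<rho> t. norm (g (of_real \<rho> * cis t)) powr p)"
  define F where "F = (\<lambda>t \<theta>. poisson_kernel r (of_real s * cis t) \<theta> / (2 * pi) * U r \<theta>)"
  have U_cont: "continuous_on A (U \<rho>)" if "0 \<le> \<rho>" "\<rho> \<le> r" for A \<rho>
    unfolding U_def using p that
    by (intro continuous_on_norm_powr continuous_on_compose_polar[OF holomorphic_on_imp_continuous_on[OF holg]]
        continuous_on_const continuous_on_id) (auto simp: norm_mult)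
  have "norm (of_real r * cis \<theta> - of_real s * cis t) \<noteq> 0" for \<theta> t
  proof -
    have "r - s \<le> norm (of_real r * cis \<theta> - of_real s * cis t)"
      using norm_triangle_ineq2[of "of_real r * cis \<theta>" "of_real s * cis t"] s by (simp add: norm_mult)
    then show ?thesis
      using \<open>s < r\<close> by auto
  qed
  then have F_cont: "continuous_on (cbox (0, 0) (2*pi, 2*pi)) (\<lambda>(t, \<theta>). F t \<theta>)"
    unfolding F_def case_prod_beta poisson_kernel_def cis_conv_exp
    by (intro continuous_intros continuous_on_compose2[OF U_cont continuous_on_snd])
       (use s in \<open>auto simp: cis_conv_exp\<close>)
  have "U s t \<le> integral {0..2*pi} (F t)" for t
    unfolding U_def F_def
    by (rule norm_powr_le_poisson_integral[OF holg p]) (use s \<open>s < r\<close> in \<open>simp add: norm_mult\<close>)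
  moreover have "continuous_on {0..2*pi} (\<lambda>t. integral {0..2*pi} (F t))"
    using F_cont integral_continuous_on_param[where U="{0..2*pi}" and f=F and a=0 and b="2*pi"]
    by (simp add: cbox_Pair_eq)
  ultimately have "integral {0..2*pi} (U s) \<le> integral {0..2*pi} (\<lambda>t. integral {0..2*pi} (F t))"
    using U_cont[OF s] by (intro integral_le integrable_continuous_interval) auto
  also have "\<dots> = integral {0..2*pi} (\<lambda>\<theta>. integral {0..2*pi} (\<lambda>t. F t \<theta>))"
    using integral_swap_continuous[where f=F and a=0 and c=0 and b="2*pi" and d="2*pi"] F_cont by simp
  also have "\<dots> = integral {0..2*pi} (U r)"
  proof (rule integral_cong)
    fix \<theta>
    \<comment> \<open>by symmetry of the kernel, integrating in the first variable also gives \<open>2 * pi\<close>\<close>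
    have "(poisson_kernel r (of_real s * cis \<theta>) has_integral 2 * pi) {0..2*pi}"
      using poisson_kernel_has_integral s \<open>s < r\<close> by (simp add: norm_mult)
    then have "((\<lambda>t. F t \<theta>) has_integral (2 * pi) / (2 * pi) * U r \<theta>) {0..2*pi}"
      unfolding F_def poisson_kernel_swap[OF s(1), of r _ \<theta>]
      by (intro has_integral_mult_left has_integral_divide)
    then show "integral {0..2*pi} (\<lambda>t. F t \<theta>) = U r \<theta>"
      by (simp add: integral_unique)
  qed
  finally show ?thesis
    by (simp add: U_def circle_powr_integral_def)
qed simp

section \<open>Integral means of a function with derivative in a Bergman space\<close>

lemma circle_powr_integral_nonneg: "0 \<le> circle_powr_integral p g r"
  unfolding circle_powr_integral_def
  by (cases "(\<lambda>t. norm (g (of_real r * cis t)) powr p) integrable_on {0..2*pi}")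
     (auto intro: integral_nonneg simp: not_integrable_integral)

lemma continuous_on_circle_powr_integral:
  assumes "continuous_on (cball 0 a) g" "p > 0"
  shows "continuous_on {0..a} (circle_powr_integral p g)"
proof -
  have "continuous_on ({0..a} \<times> cbox 0 (2*pi)) (\<lambda>(s, t). norm (g (of_real s * cis t)) powr p)"
    unfolding case_prod_beta
    by (intro continuous_on_norm_powr continuous_on_compose_polar[OF assms(1)] continuous_intros assms(2))
       (auto simp: norm_mult)
  then show ?thesis
    unfolding circle_powr_integral_def
    using integral_continuous_on_param[where U="{0..a}" and f="\<lambda>s t. norm (g (of_real s * cis t)) powr p"]
    by simp
qed

lemma integral_mean_eq_circle_powr_integral:
  assumes "continuous_on (cball 0 r) g" "0 \<le> r" "p > 0"
  shows "integral_mean p g r = (circle_powr_integral p g r / (2 * pi)) powr (1 / p)"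
proof -
  have "continuous_on {0..2*pi} (\<lambda>t. norm (g (of_real r * cis t)) powr p)"
    by (intro continuous_on_norm_powr continuous_on_compose_polar[OF assms(1)] continuous_intros assms(3))
       (use assms(2) in \<open>auto simp: norm_mult\<close>)
  then have "(LBINT t=0..2*pi. norm (g (of_real r * cis t)) powr p) = circle_powr_integral p g r"
    unfolding circle_powr_integral_def
    by (intro interval_integral_eq_integral[of 0 "2 * pi", simplified zero_ereal_def[symmetric]]
        borel_integrable_atLeastAtMost') auto
  then show ?thesis
    by (simp add: integral_mean_def)
qed

lemma integral_circle_powr_integral_le_ball:
  fixes g :: "complex \<Rightarrow> complex"
  assumes holg: "g holomorphic_on cball 0 \<rho>" and q: "q \<ge> 1" and "0 < \<rho>"
  shows "integral {0..\<rho>} (circle_powr_integral q g) \<le> 2 / \<rho> * integral (ball 0 \<rho>) (\<lambda>z. norm (g z) powr q)"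
proof -
  have g: "continuous_on (cball 0 \<rho>) g"
    using holg holomorphic_on_imp_continuous_on by blast
  have "integral {0..\<rho>} (circle_powr_integral q g) \<le> 2 / \<rho> * integral {0..\<rho>} (\<lambda>s. s * circle_powr_integral q g s)"
  proof (rule Chebyshev_integral_increasing[OF \<open>0 < \<rho>\<close> continuous_on_circle_powr_integral[OF g]])
    show "circle_powr_integral q g x \<le> circle_powr_integral q g y" if "0 \<le> x" "x \<le> y" "y \<le> \<rho>" for x y
      using that by (intro circle_powr_integral_mono[OF holomorphic_on_subset[OF holg] q]) auto
  qed (use q in auto)
  also have "integral {0..\<rho>} (\<lambda>s. s * circle_powr_integral q g s) = integral (ball 0 \<rho>) (\<lambda>z. norm (g z) powr q)"
    using integral_unique[OF has_integral_polar[OF continuous_on_norm_powr[OF g, of q]]] q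
    by (simp add: circle_powr_integral_def)
  finally show ?thesis .
qed

lemma integral_circle_powr_integral_le:
  fixes g :: "complex \<Rightarrow> complex"
  assumes holg: "g holomorphic_on ball 0 1" and q: "q \<ge> 1" and r: "0 \<le> r" "r < 1"
    and int: "(\<lambda>z. norm (g z) powr q) integrable_on ball 0 1"
  shows "integral {0..r} (circle_powr_integral q g) \<le> 2 * integral (ball 0 1) (\<lambda>z. norm (g z) powr q)"
proof -
  define X where "X = integral {0..r} (circle_powr_integral q g)"
  define Y where "Y = integral (ball 0 1) (\<lambda>z. norm (g z) powr q)"
  have cont: "continuous_on {0..a} (circle_powr_integral q g)" if "a < 1" for a
    using holomorphic_on_imp_continuous_on[OF holg] that q
    by (intro continuous_on_circle_powr_integral) (auto elim: continuous_on_subset)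
  have "X \<ge> 0"
    unfolding X_def using r cont
    by (intro integral_nonneg integrable_continuous_interval circle_powr_integral_nonneg) auto
  \<comment> \<open>the disc of radius \<open>\<rho>\<close> is exhausted as \<open>\<rho> \<rightarrow> 1\<close>\<close>
  have bound: "\<rho> * X \<le> 2 * Y" if "r < \<rho>" "\<rho> < 1" for \<rho>
  proof -
    have g: "continuous_on (cball 0 \<rho>) g"
      using continuous_on_subset[OF holomorphic_on_imp_continuous_on[OF holg], of "cball 0 \<rho>"] that
      by (simp add: cball_subset_ball_iff)
    have "X \<le> integral {0..\<rho>} (circle_powr_integral q g)"
      unfolding X_def using that r cont[of r] cont[of \<rho>]
      by (intro integral_subset_le integrable_continuous_interval) (auto simp: circle_powr_integral_nonneg)
    also have "\<dots> \<le> 2 / \<rho> * integral (ball 0 \<rho>) (\<lambda>z. norm (g z) powr q)"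
      using that r by (intro integral_circle_powr_integral_le_ball[OF holomorphic_on_subset[OF holg] q]) auto
    also have "\<dots> \<le> 2 / \<rho> * Y"
      unfolding Y_def
    proof (intro mult_left_mono integral_subset_le)
      show "(\<lambda>z. norm (g z) powr q) integrable_on ball 0 \<rho>"
        using has_integral_polar[OF continuous_on_norm_powr[OF g, of q]] q by auto
    qed (use that r int in \<open>auto simp: subset_ball\<close>)
    finally show ?thesis
      using that r by (simp add: field_simps)
  qed
  have "X \<le> 2 * Y"
  proof (rule field_le_mult_one_interval)
    fix z :: real
    assume "0 < z" "z < 1"
    define \<rho> where "\<rho> = max z ((1 + r) / 2)"
    have "r < \<rho>" "\<rho> < 1" "z \<le> \<rho>"
      using r \<open>z < 1\<close> by (auto simp: \<rho>_def less_max_iff_disj)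
    have "z * X \<le> \<rho> * X"
      using \<open>z \<le> \<rho>\<close> \<open>X \<ge> 0\<close> by (rule mult_right_mono)
    also have "\<dots> \<le> 2 * Y"
      using bound \<open>r < \<rho>\<close> \<open>\<rho> < 1\<close> .
    finally show "z * X \<le> 2 * Y" .
  qed
  then show ?thesis
    by (simp add: X_def Y_def)
qed

lemma integral_radial_integral_powr_le:
  fixes g :: "complex \<Rightarrow> complex"
  assumes holg: "g holomorphic_on ball 0 1" and q: "q \<ge> 1" and r: "0 < r" "r < 1"
    and int: "(\<lambda>z. norm (g z) powr q) integrable_on ball 0 1"
  shows "integral {0..2*pi} (\<lambda>t. (integral {0..r} (\<lambda>s. norm (g (of_real s * cis t)))) powr q)
           \<le> 2 * integral (ball 0 1) (\<lambda>z. norm (g z) powr q)"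
proof -
  define H where "H = (\<lambda>t. integral {0..r} (\<lambda>s. norm (g (of_real s * cis t))))"
  have g: "continuous_on (ball 0 1) g"
    using holg holomorphic_on_imp_continuous_on by blast
  have polar_cont: "continuous_on ({0..2*pi} \<times> cbox 0 r) (\<lambda>(t, s). g (of_real s * cis t))"
    unfolding case_prod_beta
    by (intro continuous_on_compose_polar[OF g] continuous_intros) (use r in \<open>auto simp: norm_mult\<close>)
  have norm_cont: "continuous_on ({0..2*pi} \<times> cbox 0 r) (\<lambda>(t, s). norm (g (of_real s * cis t)))"
    using continuous_on_norm[OF polar_cont] by (simp add: case_prod_beta)
  have powr_cont: "continuous_on ({0..2*pi} \<times> cbox 0 r) (\<lambda>(t, s). norm (g (of_real s * cis t)) powr q)"
    using continuous_on_norm_powr[OF polar_cont, of q] q by (simp add: case_prod_beta)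
  have H_cont: "continuous_on {0..2*pi} H"
    unfolding H_def using integral_continuous_on_param[OF norm_cont] by simp
  have "H t \<ge> 0" for t
    unfolding H_def
    by (cases "(\<lambda>s. norm (g (of_real s * cis t))) integrable_on {0..r}")
       (auto intro: integral_nonneg simp: not_integrable_integral)
  then have Hq_cont: "continuous_on {0..2*pi} (\<lambda>t. H t powr q)"
    using q by (intro continuous_on_powr' H_cont continuous_on_const) auto
  have "integral {0..2*pi} (\<lambda>t. H t powr q)
      \<le> integral {0..2*pi} (\<lambda>t. integral {0..r} (\<lambda>s. norm (g (of_real s * cis t)) powr q))"
  proof (rule integral_le)
    fix t
    assume "t \<in> {0..2*pi}"
    have "continuous_on {0..r} (\<lambda>s. norm (g (of_real s * cis t)))"
      using r by (intro continuous_on_norm continuous_on_compose_polar[OF g] continuous_intros) (auto simp: norm_mult)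
    then show "H t powr q \<le> integral {0..r} (\<lambda>s. norm (g (of_real s * cis t)) powr q)"
      unfolding H_def using q r by (intro powr_integral_le_integral_powr) auto
  qed (use Hq_cont integral_continuous_on_param[OF powr_cont] in \<open>auto intro: integrable_continuous_interval\<close>)
  also have "\<dots> = integral {0..r} (circle_powr_integral q g)"
    using integral_swap_continuous[where f="\<lambda>t s. norm (g (of_real s * cis t)) powr q" and a=0 and c=0
        and b="2*pi" and d=r] powr_cont
    by (simp add: cbox_Pair_eq circle_powr_integral_def[abs_def])
  also have "\<dots> \<le> 2 * integral (ball 0 1) (\<lambda>z. norm (g z) powr q)"
    using r by (intro integral_circle_powr_integral_le[OF holg q _ _ int]) auto
  finally show ?thesis
    by (simp add: H_def)
qed

lemma radial_integral_deriv:
  fixes f :: "complex \<Rightarrow> complex"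
  assumes holf: "f holomorphic_on ball 0 1" and r: "0 \<le> r" "r < 1"
  shows "((\<lambda>s. deriv f (of_real s * cis t) * cis t) has_integral f (of_real r * cis t) - f 0) {0..r}"
proof -
  have "((\<lambda>s. deriv f (of_real s * cis t) * cis t) has_integral f (of_real r * cis t) - f (of_real 0 * cis t)) {0..r}"
  proof (rule fundamental_theorem_of_calculus[OF r(1)])
    fix s
    assume "s \<in> {0..r}"
    then have "of_real s * cis t \<in> ball 0 1"
      using r by (auto simp: norm_mult)
    then have "(f has_field_derivative deriv f (of_real s * cis t)) (at (of_real s * cis t))"
      using holf by (intro holomorphic_derivI[of f "ball 0 1"]) auto
    moreover have "((\<lambda>z. z * cis t) has_field_derivative cis t) (at (of_real s))"
      by (auto intro!: derivative_eq_intros)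
    ultimately have "((\<lambda>z. f (z * cis t)) has_field_derivative deriv f (of_real s * cis t) * cis t) (at (of_real s))"
      by (rule DERIV_chain2)
    then show "((\<lambda>s. f (of_real s * cis t)) has_vector_derivative deriv f (of_real s * cis t) * cis t)
        (at s within {0..r})"
      by (rule has_vector_derivative_real_field)
  qed
  then show ?thesis
    by simp
qed

lemma circle_powr_integral_le_bergman:
  fixes f :: "complex \<Rightarrow> complex"
  assumes holf: "f holomorphic_on ball 0 1" and q: "q \<ge> 1" and r: "0 < r" "r < 1"
    and int: "(\<lambda>z. norm (deriv f z) powr q) integrable_on ball 0 1"
  shows "(circle_powr_integral q f r / (2 * pi)) powr (1 / q)
           \<le> norm (f 0) + ((1 / pi) * integral (ball 0 1) (\<lambda>z. norm (deriv f z) powr q)) powr (1 / q)"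
proof -
  define g where "g = deriv f"
  define H where "H = (\<lambda>t. integral {0..r} (\<lambda>s. norm (g (of_real s * cis t))))"
  define F where "F = (\<lambda>t. norm (f (of_real r * cis t)))"
  have holg: "g holomorphic_on ball 0 1"
    unfolding g_def by (rule holomorphic_deriv[OF holf open_ball])
  have g: "continuous_on (ball 0 1) g" and f: "continuous_on (ball 0 1) f"
    using holf holg holomorphic_on_imp_continuous_on by blast+
  have g_ray: "continuous_on {0..r} (\<lambda>s. g (of_real s * cis t))" for t
    using r by (intro continuous_on_compose_polar[OF g] continuous_intros) (auto simp: norm_mult)
  have H_nonneg: "H t \<ge> 0" for t
    unfolding H_def by (intro integral_nonneg integrable_continuous_interval continuous_on_norm g_ray) auto
  have "continuous_on ({0..2*pi} \<times> cbox 0 r) (\<lambda>(t, s). norm (g (of_real s * cis t)))"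
    unfolding case_prod_beta using r
    by (intro continuous_on_norm continuous_on_compose_polar[OF g] continuous_intros) (auto simp: norm_mult)
  then have H_cont: "continuous_on {0..2*pi} H"
    unfolding H_def using integral_continuous_on_param by fastforce
  have F_cont: "continuous_on {0..2*pi} F"
    unfolding F_def using r
    by (intro continuous_on_norm continuous_on_compose_polar[OF f] continuous_intros) (auto simp: norm_mult)
  have F_le: "F t \<le> norm (f 0) + H t" for t
  proof -
    have ftc: "((\<lambda>s. g (of_real s * cis t) * cis t) has_integral f (of_real r * cis t) - f 0) {0..r}"
      unfolding g_def using r by (intro radial_integral_deriv[OF holf]) auto
    have "norm (f (of_real r * cis t) - f 0) \<le> H t"
      unfolding H_def integral_unique[OF ftc, symmetric]
      by (intro integral_norm_bound_integral integrable_continuous_interval continuous_on_norm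
          continuous_on_mult g_ray continuous_on_const) (auto simp: norm_mult)
    then show ?thesis
      unfolding F_def using norm_triangle_ineq2[of "f (of_real r * cis t)" "f 0"] by linarith
  qed
  have "(integral {0..2*pi} (\<lambda>t. F t powr q) / (2 * pi - 0)) powr (1 / q)
      \<le> norm (f 0) + (integral {0..2*pi} (\<lambda>t. H t powr q) / (2 * pi - 0)) powr (1 / q)"
    using q F_le H_nonneg
    by (intro Minkowski_add_const_integral_powr F_cont H_cont) (auto simp: F_def)
  also have "integral {0..2*pi} (\<lambda>t. H t powr q) / (2 * pi - 0)
      \<le> (1 / pi) * integral (ball 0 1) (\<lambda>z. norm (g z) powr q)"
    using divide_right_mono[OF integral_radial_integral_powr_le[OF holg q r int[folded g_def]], of "2 * pi"]
    by (simp add: H_def)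
  then have "(integral {0..2*pi} (\<lambda>t. H t powr q) / (2 * pi - 0)) powr (1 / q)
      \<le> ((1 / pi) * integral (ball 0 1) (\<lambda>z. norm (g z) powr q)) powr (1 / q)"
    using q H_nonneg H_cont
    by (intro powr_mono2 divide_nonneg_nonneg integral_nonneg integrable_continuous_interval
        continuous_on_powr' continuous_on_const) auto
  finally show ?thesis
    by (simp add: F_def g_def circle_powr_integral_def)
qed

lemma integral_mean_le_bergman_norm:
  fixes f :: "complex \<Rightarrow> complex"
  assumes holf: "f holomorphic_on ball 0 1" and q: "q \<ge> 1" and r: "0 < r" "r < 1"
    and int: "set_integrable lborel (ball 0 1) (\<lambda>z. norm (deriv f z) powr q)"
  shows "integral_mean q f r \<le> bergman_norm (ereal q) (deriv f) + norm (f 0)"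
proof -
  have "continuous_on (cball 0 r) f"
    using continuous_on_subset[OF holomorphic_on_imp_continuous_on[OF holf], of "cball 0 r"] r
    by (simp add: cball_subset_ball_iff)
  then have "integral_mean q f r = (circle_powr_integral q f r / (2 * pi)) powr (1 / q)"
    using r q by (intro integral_mean_eq_circle_powr_integral) auto
  also have "\<dots> \<le> norm (f 0) + ((1 / pi) * integral (ball 0 1) (\<lambda>z. norm (deriv f z) powr q)) powr (1 / q)"
    using circle_powr_integral_le_bergman[OF holf q r set_borel_integral_eq_integral(1)[OF int]] .
  also have "\<dots> = bergman_norm (ereal q) (deriv f) + norm (f 0)"
    using set_borel_integral_eq_integral(2)[OF int] by (simp add: bergman_norm_def unit_disc_def)
  finally show ?thesis .
qed

lemma sup_norm_le_sup_norm_deriv: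
  fixes f :: "complex \<Rightarrow> complex"
  assumes holf: "f holomorphic_on ball 0 1" and bounded: "bounded (deriv f ` ball 0 1)"
  shows "bounded (f ` ball 0 1)
           \<and> (SUP z\<in>ball 0 1. norm (f z)) \<le> (SUP z\<in>ball 0 1. norm (deriv f z)) + norm (f 0)"
proof -
  define M where "M = (SUP z\<in>ball 0 1. norm (deriv f z))"
  have "bdd_above ((\<lambda>z. norm (deriv f z)) ` ball 0 1)"
    using bounded unfolding bounded_iff bdd_above_def by fastforce
  then have M: "norm (deriv f z) \<le> M" if "z \<in> ball 0 1" for z
    unfolding M_def using that by (rule cSUP_upper2) simp
  have f_le: "norm (f z) \<le> M + norm (f 0)" if z: "z \<in> ball 0 1" for z
  proof -
    have "(f has_field_derivative deriv f w) (at w within ball 0 1)" if "w \<in> ball 0 1" for w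
      using holf that by (intro holomorphic_derivI[of f "ball 0 1"]) auto
    then have "norm (f z - f 0) \<le> M * norm (z - 0)"
      by (intro field_differentiable_bound[OF convex_ball _ M z]) auto
    also have "\<dots> \<le> M"
      using z order_trans[OF norm_ge_zero M[of 0]] by (intro mult_left_le) auto
    finally show ?thesis
      using norm_triangle_ineq2[of "f z" "f 0"] by linarith
  qed
  then have "bounded (f ` ball 0 1)"
    unfolding bounded_iff by blast
  moreover have "(SUP z\<in>ball 0 1. norm (f z)) \<le> M + norm (f 0)"
    using f_le by (intro cSUP_least) auto
  ultimately show ?thesis
    by (simp add: M_def)
qed

theorem lemma1p3:
  fixes p :: ereal and f :: "complex \<Rightarrow> complex"
  assumes "1 \<le> p"
    and "f holomorphic_on unit_disc"
    and "in_bergman p (deriv f)"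
  shows "in_hardy p f \<and> hardy_norm p f \<le> bergman_norm p (deriv f) + cmod (f 0)"
proof (cases "p = \<infinity>")
  case True
  then show ?thesis
    using assms sup_norm_le_sup_norm_deriv
    by (simp add: in_bergman_def in_hardy_def hardy_norm_def bergman_norm_def unit_disc_def)
next
  case False
  then obtain q where p: "p = ereal q" and q: "q \<ge> 1"
    using assms(1) by (cases p) auto
  have holf: "f holomorphic_on ball 0 1"
    using assms(2) by (simp add: unit_disc_def)
  have "set_integrable lborel (ball 0 1) (\<lambda>z. norm (deriv f z) powr q)"
    using assms(3) p by (simp add: in_bergman_def unit_disc_def)
  then have bound: "integral_mean q f r \<le> bergman_norm p (deriv f) + norm (f 0)" if "r \<in> {0<..<1}" for r
    using integral_mean_le_bergman_norm[OF holf q] that p by simp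
  have "bdd_above (integral_mean q f ` {0<..<1})"
    using bound by (rule bdd_aboveI2)
  moreover have "hardy_norm p f \<le> bergman_norm p (deriv f) + norm (f 0)"
    unfolding hardy_norm_def using p cSUP_least[of "{0<..<1}" "integral_mean q f", OF _ bound] by simp
  ultimately show ?thesis
    using p assms(2) by (simp add: in_hardy_def)
qed

end
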